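(* If a state over time function $\star$ satisfies axiom (E), then it is state-linear, i.e. linear in its second argument.
   Context: Systems are finite-dimensional Hilbert spaces; $\mathfrak{B}(A)$ linear operators, $\mathfrak{S}(A)$ density operators, $\mathfrak{C}(A,B)$ quantum channels (CPTP maps $\mathfrak{B}(A)\to\mathfrak{B}(B)$). A state over time function assigns to all systems $A,B$ a map $\star:\mathfrak{C}(A,B)\times\mathfrak{S}(A)\to\mathfrak{B}(A\otimes B)$, $(\mathcal{E},\rho)\mapsto\mathcal{E}_{B|A}\star\rho_A$, with $\mathrm{Tr}_A[\mathcal{E}\star\rho]=\mathcal{E}(\rho)$ and $\mathrm{Tr}_B[\mathcal{E}\star\rho]=\rho$, extended homogeneously by $(\lambda\mathcal{E})\star\rho=\mathcal{E}\star(\lambda\rho)=\lambda(\mathcal{E}\star\rho)$, $\lambda\in\mathbb{C}$. It is state-linear if it is linear in the second argument. A quantum state over spacetime on $A\otimes E$ is either a density operator on $A\otimes E$ or an operator of the form $\mathcal{F}\star\sigma$. Axiom (E): for all systems $A,B,E$, every quantum state over spacetime $\rho_{AE}$ and every channel $\mathcal{E}_{B|A}$, an operator $\mathcal{E}_{B|A}\star\rho_{AE}$ on $A\otimes B\otimes E$ is defined such that for every completely positive trace-non-increasing map $\mathcal{I}_E$ on $E$, $\mathcal{I}_E[\mathcal{E}_{B|A}\star\rho_{AE}]=\mathcal{E}_{B|A}\star\mathcal{I}_E(\rho_{AE})$, and $\mathrm{Tr}_A[\mathcal{E}_{B|A}\star\rho_{AE}]=(\mathcal{E}_{B|A}\otimes\mathrm{id}_E)(\rho_{AE})$.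 *)

theory Defs
  imports "Jordan_Normal_Form.Matrix" Complex_Main
begin

text \<open>A system is a finite-dimensional Hilbert space C^d with d > 0; operators on it are
  complex d x d matrices.  The tensor product A \<otimes> R is C^(dA*dR) with the
  Kronecker index convention  (a, r) \<mapsto> a*dR + r.  Maps between operator spaces
  are HOL functions on matrices; only their values on the relevant carrier matter.\<close>

type_synonym opmap = "complex mat \<Rightarrow> complex mat"

definition tr :: "complex mat \<Rightarrow> complex" where
  "tr X = (\<Sum>i<dim_row X. X $$ (i, i))"

definition psd :: "nat \<Rightarrow> complex mat \<Rightarrow> bool" where
  "psd d X \<longleftrightarrow> X \<in> carrier_mat d d \<and>
     (\<forall>v :: nat \<Rightarrow> complex. let q = (\<Sum>i<d. \<Sum>j<d. cnj (v i) * X $$ (i, j) * v j)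
        in Im q = 0 \<and> Re q \<ge> 0)"

definition density :: "nat \<Rightarrow> complex mat \<Rightarrow> bool" where
  "density d \<rho> \<longleftrightarrow> psd d \<rho> \<and> tr \<rho> = 1"

definition rblock :: "nat \<Rightarrow> complex mat \<Rightarrow> nat \<Rightarrow> nat \<Rightarrow> complex mat" where
  "rblock dR X i j = mat dR dR (\<lambda>(k, l). X $$ (i * dR + k, j * dR + l))"

definition lblock :: "nat \<Rightarrow> nat \<Rightarrow> complex mat \<Rightarrow> nat \<Rightarrow> nat \<Rightarrow> complex mat" where
  "lblock dA dR X r s = mat dA dA (\<lambda>(a, b). X $$ (a * dR + r, b * dR + s))"

text \<open>(id_A \<otimes> \<Phi>)(X) for \<Phi> : R \<rightarrow> R', X on A \<otimes> R.\<close>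
definition app_right :: "nat \<Rightarrow> nat \<Rightarrow> nat \<Rightarrow> opmap \<Rightarrow> complex mat \<Rightarrow> complex mat" where
  "app_right dA dR dR' \<Phi> X = mat (dA * dR') (dA * dR')
     (\<lambda>(p, q). \<Phi> (rblock dR X (p div dR') (q div dR')) $$ (p mod dR', q mod dR'))"

text \<open>(\<Phi> \<otimes> id_R)(X) for \<Phi> : A \<rightarrow> B, X on A \<otimes> R.\<close>
definition app_left :: "nat \<Rightarrow> nat \<Rightarrow> nat \<Rightarrow> opmap \<Rightarrow> complex mat \<Rightarrow> complex mat" where
  "app_left dA dB dR \<Phi> X = mat (dB * dR) (dB * dR)
     (\<lambda>(p, q). \<Phi> (lblock dA dR X (p mod dR) (q mod dR)) $$ (p div dR, q div dR))"

definition ptrace_left :: "nat \<Rightarrow> nat \<Rightarrow> complex mat \<Rightarrow> complex mat" where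
  "ptrace_left dA dR X = mat dR dR (\<lambda>(k, l). \<Sum>i<dA. X $$ (i * dR + k, i * dR + l))"

definition ptrace_right :: "nat \<Rightarrow> nat \<Rightarrow> complex mat \<Rightarrow> complex mat" where
  "ptrace_right dA dR X = mat dA dA (\<lambda>(i, j). \<Sum>k<dR. X $$ (i * dR + k, j * dR + k))"

definition lin_on :: "nat \<Rightarrow> opmap \<Rightarrow> bool" where
  "lin_on d \<Phi> \<longleftrightarrow> (\<forall>X \<in> carrier_mat d d. \<forall>Y \<in> carrier_mat d d. \<Phi> (X + Y) = \<Phi> X + \<Phi> Y)
     \<and> (\<forall>X \<in> carrier_mat d d. \<forall>c. \<Phi> (c \<cdot>\<^sub>m X) = c \<cdot>\<^sub>m \<Phi> X)"

definition cp_map :: "nat \<Rightarrow> nat \<Rightarrow> opmap \<Rightarrow> bool" where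
  "cp_map dA dB \<Phi> \<longleftrightarrow> lin_on dA \<Phi> \<and> (\<forall>X \<in> carrier_mat dA dA. \<Phi> X \<in> carrier_mat dB dB) \<and>
     (\<forall>k>0. \<forall>X. psd (k * dA) X \<longrightarrow> psd (k * dB) (app_right k dA dB \<Phi> X))"

definition channel :: "nat \<Rightarrow> nat \<Rightarrow> opmap \<Rightarrow> bool" where
  "channel dA dB \<Phi> \<longleftrightarrow> cp_map dA dB \<Phi> \<and> (\<forall>X \<in> carrier_mat dA dA. tr (\<Phi> X) = tr X)"

definition cptni :: "nat \<Rightarrow> nat \<Rightarrow> opmap \<Rightarrow> bool" where
  "cptni dA dB \<Phi> \<longleftrightarrow> cp_map dA dB \<Phi> \<and> (\<forall>X. psd dA X \<longrightarrow> Re (tr (\<Phi> X)) \<le> Re (tr X))"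

text \<open>A state over time function: star dA dB \<E> \<rho> = \<E>_{B|A} \<star> \<rho>_A, an operator on A \<otimes> B.\<close>
type_synonym sotf = "nat \<Rightarrow> nat \<Rightarrow> opmap \<Rightarrow> complex mat \<Rightarrow> complex mat"

definition state_over_time_fun :: "sotf \<Rightarrow> bool" where
  "state_over_time_fun star \<longleftrightarrow> (\<forall>dA dB \<E> \<rho>. dA > 0 \<longrightarrow> dB > 0 \<longrightarrow> channel dA dB \<E> \<longrightarrow> density dA \<rho> \<longrightarrow>
      star dA dB \<E> \<rho> \<in> carrier_mat (dA * dB) (dA * dB) \<and>
      ptrace_left dA dB (star dA dB \<E> \<rho>) = \<E> \<rho> \<and>
      ptrace_right dA dB (star dA dB \<E> \<rho>) = \<rho>)"

text \<open>Homogeneous extension: (\<lambda>\<E>) \<star> \<rho> = \<E> \<star> (\<lambda>\<rho>) = \<lambda>(\<E> \<star> \<rho>).  On the second argument it is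
  defined on scalar multiples of states.  State-linearity: this extension is linear,
  i.e. it is the restriction of a linear map on B(A).\<close>
definition state_linear :: "sotf \<Rightarrow> bool" where
  "state_linear star \<longleftrightarrow> (\<forall>dA dB \<E>. dA > 0 \<longrightarrow> dB > 0 \<longrightarrow> channel dA dB \<E> \<longrightarrow>
     (\<exists>L. lin_on dA L \<and> (\<forall>\<rho> c. density dA \<rho> \<longrightarrow> L (c \<cdot>\<^sub>m \<rho>) = c \<cdot>\<^sub>m star dA dB \<E> \<rho>)))"

definition qsst :: "sotf \<Rightarrow> nat \<Rightarrow> nat \<Rightarrow> complex mat \<Rightarrow> bool" where
  "qsst star dA dE X \<longleftrightarrow> density (dA * dE) X \<or>
     (\<exists>\<F> \<sigma>. channel dA dE \<F> \<and> density dA \<sigma> \<and> X = star dA dE \<F> \<sigma>)"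

text \<open>Axiom (E).  ext dA dB dE \<E> X = \<E>_{B|A} \<star> X_{AE}, an operator on A \<otimes> B \<otimes> E
  (ordered as (A \<otimes> B) \<otimes> E).  For a trivial system E (dimension 1, A \<otimes> E = A) it is the
  given (homogeneously extended) state over time function.\<close>
definition axiom_E :: "sotf \<Rightarrow> (nat \<Rightarrow> nat \<Rightarrow> nat \<Rightarrow> opmap \<Rightarrow> complex mat \<Rightarrow> complex mat) \<Rightarrow> bool" where
  "axiom_E star ext \<longleftrightarrow>
    (\<forall>dA dB \<E> \<rho> c. dA > 0 \<longrightarrow> dB > 0 \<longrightarrow> channel dA dB \<E> \<longrightarrow> density dA \<rho> \<longrightarrow>
        ext dA dB 1 \<E> (c \<cdot>\<^sub>m \<rho>) = c \<cdot>\<^sub>m star dA dB \<E> \<rho>) \<and>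
    (\<forall>dA dB dE \<E> X. dA > 0 \<longrightarrow> dB > 0 \<longrightarrow> dE > 0 \<longrightarrow> channel dA dB \<E> \<longrightarrow> qsst star dA dE X \<longrightarrow>
        ext dA dB dE \<E> X \<in> carrier_mat (dA * dB * dE) (dA * dB * dE) \<and>
        (\<forall>dE' \<I>. dE' > 0 \<longrightarrow> cptni dE dE' \<I> \<longrightarrow>
           app_right (dA * dB) dE dE' \<I> (ext dA dB dE \<E> X)
             = ext dA dB dE' \<E> (app_right dA dE dE' \<I> X)) \<and>
        ptrace_left dA (dB * dE) (ext dA dB dE \<E> X) = app_left dA dB dE \<E> X)"

end

theory Submission
  imports Defs "HOL-Analysis.Convex"
begin

(* Feed the maximally entangled state \<Phi> on A \<otimes> A, the second factor playing the role of E,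
   into axiom (E) once, giving W = \<E> \<star> \<Phi>.  For a density operator \<rho> the functional
   Z \<mapsto> tr (\<rho>^T Z) is completely positive and trace non-increasing, and applied to the E-factor
   of \<Phi> it yields \<rho> / d.  Axiom (E) therefore gives \<E> \<star> \<rho> = d (id \<otimes> tr (\<rho>^T _)) W,
   which is visibly linear in \<rho>.  Complete positivity and the trace bound come down, through
   Gram decompositions of positive semidefinite kernels, to 0 \<le> tr (R X) \<le> tr R tr X for
   positive semidefinite R and X. *)

definition quad_form :: "nat \<Rightarrow> (nat \<Rightarrow> nat \<Rightarrow> complex) \<Rightarrow> (nat \<Rightarrow> complex) \<Rightarrow> complex" where
  "quad_form n m v = (\<Sum>a<n. \<Sum>b<n. cnj (v a) * m a b * v b)"

definition psd_kernel :: "nat \<Rightarrow> (nat \<Rightarrow> nat \<Rightarrow> complex) \<Rightarrow> bool" where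
  "psd_kernel n m \<longleftrightarrow> (\<forall>v. 0 \<le> quad_form n m v)"

definition kdelta :: "nat \<Rightarrow> nat \<Rightarrow> complex" where
  "kdelta k a = (if a = k then 1 else 0)"

lemma kdelta_simps [simp]:
  "kdelta k a * z = (if a = k then z else 0)" "z * kdelta k a = (if a = k then z else 0)"
  "cnj (kdelta k a) = kdelta k a"
  by (simp_all add: kdelta_def)

lemma psd_iff_psd_kernel: "psd d X \<longleftrightarrow> X \<in> carrier_mat d d \<and> psd_kernel d (\<lambda>a b. X $$ (a, b))"
  unfolding psd_def psd_kernel_def quad_form_def Let_def less_eq_complex_def by auto

lemma quad_form_add_kdelta:
  assumes k: "k < n"
  shows "quad_form n m (\<lambda>a. v a + t * kdelta k a) =
    quad_form n m v + cnj t * (\<Sum>b<n. m k b * v b) + t * (\<Sum>a<n. cnj (v a) * m a k) + cnj t * t * m k k"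
proof -
  have expand: "cnj (v a + t * kdelta k a) * m a b * (v b + t * kdelta k b) =
     cnj (v a) * m a b * v b + (if b = k then cnj (v a) * m a k * t else 0)
     + (if a = k then cnj t * (m k b * v b) else 0)
     + (if a = k then if b = k then cnj t * t * m k k else 0 else 0)" for a b
    by (auto simp: algebra_simps)
  have sum1: "(\<Sum>a<n. \<Sum>b<n. if b = k then cnj (v a) * m a k * t else 0) = t * (\<Sum>a<n. cnj (v a) * m a k)"
    using k by (simp add: sum_distrib_left algebra_simps)
  have sum2: "(\<Sum>a<n. \<Sum>b<n. if a = k then cnj t * (m k b * v b) else 0) = cnj t * (\<Sum>b<n. m k b * v b)"
    using k by (subst sum.swap) (simp add: sum_distrib_left)
  have sum3: "(\<Sum>a<n. \<Sum>b<n. if a = k then if b = k then cnj t * t * m k k else 0 else 0) = cnj t * t * m k k"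
    using k by (subst sum.swap) simp
  show ?thesis
    unfolding quad_form_def expand sum.distrib sum1 sum2 sum3 by simp
qed

lemma quad_form_kdelta_pair:
  assumes "a < n" "b < n"
  shows "quad_form n m (\<lambda>x. kdelta a x + t * kdelta b x) = m a a + cnj t * m b a + t * m a b + cnj t * t * m b b"
proof -
  have "quad_form n m (kdelta a) = m a a"
    using quad_form_add_kdelta[OF assms(1), of m "\<lambda>_. 0" 1] assms
    by (simp add: quad_form_def kdelta_def)
  moreover have "(\<Sum>x<n. m b x * kdelta a x) = m b a" "(\<Sum>x<n. cnj (kdelta a x) * m x b) = m a b"
    using assms by simp_all
  ultimately show ?thesis
    using quad_form_add_kdelta[OF assms(2), of m "kdelta a" t] by simp
qed

lemma psd_kernel_diag_nonneg:
  assumes "psd_kernel n m" "a < n"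
  shows "0 \<le> m a a"
proof -
  have "0 \<le> quad_form n m (\<lambda>x. kdelta a x + 0 * kdelta a x)"
    using assms(1) unfolding psd_kernel_def by blast
  then show ?thesis
    unfolding quad_form_kdelta_pair[OF assms(2,2)] by simp
qed

lemma psd_kernel_hermitian:
  assumes m: "psd_kernel n m" and "a < n" "b < n"
  shows "m b a = cnj (m a b)"
proof -
  have diag: "0 \<le> m a a" "0 \<le> m b b"
    using psd_kernel_diag_nonneg m assms by auto
  have "0 \<le> m a a + cnj t * m b a + t * m a b + cnj t * t * m b b" for t
    using m unfolding psd_kernel_def quad_form_kdelta_pair[OF assms(2,3), symmetric] by blast
  from this[of 1] this[of \<i>] have "Im (m b a) + Im (m a b) = 0" "Re (m a b) - Re (m b a) = 0"
    using diag by (simp_all add: less_eq_complex_def)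
  then show ?thesis by (simp add: complex_eq_iff)
qed

lemma psd_kernel_zero_diag:
  assumes m: "psd_kernel n m" and "k < n" "b < n" and zero: "m k k = 0"
  shows "m k b = 0"
proof (rule ccontr)
  assume "m k b \<noteq> 0"
  define z where "z = m k b"
  then have z_pos: "0 < Re z ^ 2 + Im z ^ 2"
    using \<open>m k b \<noteq> 0\<close> by (simp add: complex_eq_iff sum_power2_gt_zero_iff)
  define x where "x = (Re (m b b) + 1) / (2 * (Re z ^ 2 + Im z ^ 2))"
  define t where "t = - (of_real x * z)"
  have "0 \<le> quad_form n m (\<lambda>y. kdelta b y + t * kdelta k y)"
    using m unfolding psd_kernel_def by blast
  then have "0 \<le> m b b + cnj t * z + t * cnj z"
    using psd_kernel_hermitian[OF m assms(2,3)]
    unfolding quad_form_kdelta_pair[OF assms(3,2)] zero z_def by simp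
  then have "0 \<le> Re (m b b) - 2 * x * (Re z ^ 2 + Im z ^ 2)"
    unfolding t_def by (simp add: less_eq_complex_def power2_eq_square algebra_simps)
  moreover have "2 * x * (Re z ^ 2 + Im z ^ 2) = Re (m b b) + 1"
    unfolding x_def using z_pos by (simp add: field_simps)
  ultimately show False by simp
qed

text \<open>Schur complement of a positive diagonal entry: the deflated form at v is the original form
  at v shifted along the k-th coordinate.\<close>

lemma psd_kernel_deflate:
  assumes m: "psd_kernel n m" and k: "k < n" and r: "0 < r" and mkk: "m k k = of_real (r\<^sup>2)"
  shows "psd_kernel n (\<lambda>a b. m a b - m a k / of_real r * cnj (m b k / of_real r))"
  unfolding psd_kernel_def
proof
  fix v
  define w where "w a = m a k / of_real r" for a
  define s where "s = (\<Sum>a<n. cnj (v a) * w a)"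
  define t where "t = - cnj s / of_real r"
  have "(\<Sum>a<n. \<Sum>b<n. cnj (v a) * (w a * cnj (w b)) * v b) = s * cnj s"
    unfolding s_def cnj_sum sum_product by (intro sum.cong refl) (simp add: mult_ac)
  then have deflated: "quad_form n (\<lambda>a b. m a b - w a * cnj (w b)) v = quad_form n m v - s * cnj s"
    unfolding quad_form_def by (simp add: algebra_simps sum_subtractf)
  have col: "(\<Sum>a<n. cnj (v a) * m a k) = of_real r * s"
    unfolding s_def w_def using r by (simp add: sum_distrib_left field_simps)
  have "(\<Sum>b<n. m k b * v b) = (\<Sum>b<n. cnj (m b k) * v b)"
    using psd_kernel_hermitian[OF m _ k] by (intro sum.cong) auto
  also have "\<dots> = of_real r * cnj s"
    unfolding s_def w_def using r by (simp add: cnj_sum sum_distrib_left field_simps)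
  finally have row: "(\<Sum>b<n. m k b * v b) = of_real r * cnj s" .
  have "quad_form n m (\<lambda>a. v a + t * kdelta k a) = quad_form n m v - s * cnj s"
    unfolding quad_form_add_kdelta[OF k] col row mkk t_def using r
    by (simp add: field_simps power2_eq_square)
  then show "0 \<le> quad_form n (\<lambda>a b. m a b - m a k / of_real r * cnj (m b k / of_real r)) v"
    using m deflated unfolding psd_kernel_def w_def by metis
qed

lemma psd_kernel_split_off:
  assumes m: "psd_kernel n m" and k: "k < n"
  obtains w where "psd_kernel n (\<lambda>a b. m a b - w a * cnj (w b))"
    and "\<And>b. b < n \<Longrightarrow> m k b = w k * cnj (w b)" and "\<And>a. a < n \<Longrightarrow> m a k = w a * cnj (w k)"
    and "\<And>a. m a k = 0 \<Longrightarrow> w a = 0"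
proof (cases "m k k = 0")
  case True
  have "m k b = 0" "m b k = 0" if "b < n" for b
    using psd_kernel_zero_diag[OF m k that True] psd_kernel_hermitian[OF m k that] by simp_all
  then show ?thesis
    using that[of "\<lambda>_. 0"] m by simp
next
  case False
  define r where "r = sqrt (Re (m k k))"
  have "0 \<le> m k k"
    using psd_kernel_diag_nonneg[OF m k] .
  then have r: "0 < r" and mkk: "m k k = of_real (r\<^sup>2)"
    using False unfolding r_def by (auto simp: less_eq_complex_def complex_eq_iff)
  define w where "w a = m a k / of_real r" for a
  show ?thesis
  proof (rule that)
    show "psd_kernel n (\<lambda>a b. m a b - w a * cnj (w b))"
      using psd_kernel_deflate[OF m k r mkk] unfolding w_def .
    show "m k b = w k * cnj (w b)" if "b < n" for b
      using psd_kernel_hermitian[OF m that k] r unfolding w_def mkk by (simp add: power2_eq_square)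
    show "m a k = w a * cnj (w k)" for a
      using r unfolding w_def mkk by (simp add: power2_eq_square)
    show "w a = 0" if "m a k = 0" for a
      using that unfolding w_def by simp
  qed
qed

lemma psd_kernel_gram_upto:
  assumes "psd_kernel n m" and "k \<le> n"
    and "\<And>a b. a < n \<Longrightarrow> b < n \<Longrightarrow> k \<le> a \<or> k \<le> b \<Longrightarrow> m a b = 0"
  shows "\<exists>u. \<forall>a<n. \<forall>b<n. m a b = (\<Sum>i<k. u i a * cnj (u i b))"
  using assms
proof (induction k arbitrary: m)
  case 0
  then show ?case by auto
next
  case (Suc k)
  then have k: "k < n" by simp
  obtain w where psd: "psd_kernel n (\<lambda>a b. m a b - w a * cnj (w b))"
    and row: "\<And>b. b < n \<Longrightarrow> m k b = w k * cnj (w b)" and col: "\<And>a. a < n \<Longrightarrow> m a k = w a * cnj (w k)"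
    and w_zero: "\<And>a. m a k = 0 \<Longrightarrow> w a = 0"
    using psd_kernel_split_off[OF Suc.prems(1) k] by blast
  have outside: "m a b = 0" if "a < n" "b < n" "Suc k \<le> a \<or> Suc k \<le> b" for a b
    using Suc.prems(3) that by blast
  have "m a b - w a * cnj (w b) = 0"
    if ab: "a < n" "b < n" "k \<le> a \<or> k \<le> b" for a b
  proof -
    consider "a = k" | "b = k" | "Suc k \<le> a" | "Suc k \<le> b"
      using ab(3) by linarith
    then show ?thesis
    proof cases
      case 3
      then show ?thesis using outside[OF ab(1,2)] outside[OF ab(1) k] w_zero by simp
    next
      case 4
      then show ?thesis using outside[OF ab(1,2)] outside[OF ab(2) k] w_zero by simp
    qed (use row col ab in simp_all)
  qed
  then obtain u where u: "\<forall>a<n. \<forall>b<n. m a b - w a * cnj (w b) = (\<Sum>i<k. u i a * cnj (u i b))"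
    using Suc.IH[OF psd] k by auto
  have "m a b = (\<Sum>i<Suc k. (u(k := w)) i a * cnj ((u(k := w)) i b))" if "a < n" "b < n" for a b
  proof -
    have "(\<Sum>i<k. (u(k := w)) i a * cnj ((u(k := w)) i b)) = (\<Sum>i<k. u i a * cnj (u i b))"
      by (intro sum.cong) auto
    then show ?thesis
      using u[rule_format, OF that] by (simp add: diff_eq_eq)
  qed
  then show ?case by blast
qed

lemma psd_kernel_gram:
  assumes "psd_kernel n m"
  obtains u where "\<And>a b. a < n \<Longrightarrow> b < n \<Longrightarrow> m a b = (\<Sum>i<n. u i a * cnj (u i b))"
  using psd_kernel_gram_upto[OF assms order_refl] by auto

lemma sum_lessThan_mult_blocks:
  fixes n k :: nat
  shows "(\<Sum>j<n * k. g j) = (\<Sum>p<n. \<Sum>a<k. g (p * k + a))"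
proof -
  have "(\<Sum>j<n * k. g j) = (\<Sum>p<n. sum g {p * k..<p * k + k})"
    by (rule sum.nat_group[symmetric])
  also have "\<dots> = (\<Sum>p<n. \<Sum>a<k. g (p * k + a))"
  proof (rule sum.cong[OF refl])
    show "sum g {p * k..<p * k + k} = (\<Sum>a<k. g (p * k + a))" for p
      using sum.shift_bounds_nat_ivl[of g 0 "p * k" k] by (simp add: atLeast0LessThan add.commute)
  qed
  finally show ?thesis .
qed

lemma sum_swap_pairs:
  "(\<Sum>p\<in>P. \<Sum>q\<in>Q. \<Sum>a\<in>A. \<Sum>b\<in>B. f p q a b) = (\<Sum>a\<in>A. \<Sum>b\<in>B. \<Sum>p\<in>P. \<Sum>q\<in>Q. f p q a b)"
proof -
  have "(\<Sum>p\<in>P. \<Sum>q\<in>Q. \<Sum>a\<in>A. \<Sum>b\<in>B. f p q a b) = (\<Sum>p\<in>P. \<Sum>a\<in>A. \<Sum>q\<in>Q. \<Sum>b\<in>B. f p q a b)"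
    by (rule sum.cong[OF refl], rule sum.swap)
  also have "\<dots> = (\<Sum>a\<in>A. \<Sum>p\<in>P. \<Sum>b\<in>B. \<Sum>q\<in>Q. f p q a b)"
    by (subst sum.swap) (rule sum.cong[OF refl], rule sum.cong[OF refl], rule sum.swap)
  also have "\<dots> = (\<Sum>a\<in>A. \<Sum>b\<in>B. \<Sum>p\<in>P. \<Sum>q\<in>Q. f p q a b)"
    by (rule sum.cong[OF refl], rule sum.swap)
  finally show ?thesis .
qed

lemma cmod_sum_mult_square_le:
  fixes f g :: "'a \<Rightarrow> complex"
  shows "(cmod (\<Sum>i\<in>A. f i * g i))\<^sup>2 \<le> (\<Sum>i\<in>A. (cmod (f i))\<^sup>2) * (\<Sum>i\<in>A. (cmod (g i))\<^sup>2)"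
proof -
  have "cmod (\<Sum>i\<in>A. f i * g i) \<le> (\<Sum>i\<in>A. cmod (f i) * cmod (g i))"
    using norm_sum[of "\<lambda>i. f i * g i" A] by (simp add: norm_mult)
  then have "(cmod (\<Sum>i\<in>A. f i * g i))\<^sup>2 \<le> (\<Sum>i\<in>A. cmod (f i) * cmod (g i))\<^sup>2"
    by (simp add: power_mono)
  also have "\<dots> \<le> (\<Sum>i\<in>A. (cmod (f i))\<^sup>2) * (\<Sum>i\<in>A. (cmod (g i))\<^sup>2)"
    by (rule Cauchy_Schwarz_ineq_sum)
  finally show ?thesis .
qed

lemma Re_mult_cnj: "Re (z * cnj z) = (cmod z)\<^sup>2"
  by (simp only: complex_norm_square[symmetric] Re_complex_of_real)

lemma Re_sum_mult_cnj:
  "Re (\<Sum>a\<in>A. \<Sum>i\<in>I. u i a * cnj (u i a)) = (\<Sum>i\<in>I. \<Sum>a\<in>A. (cmod (u i a))\<^sup>2)"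
  unfolding Re_sum Re_mult_cnj by (rule sum.swap)

lemma psd_kernel_pairing_nonneg:
  assumes r: "psd_kernel d r" and w: "psd_kernel d w"
  shows "0 \<le> (\<Sum>a<d. \<Sum>b<d. r a b * w a b)"
proof -
  obtain u where u: "\<And>a b. a < d \<Longrightarrow> b < d \<Longrightarrow> r a b = (\<Sum>i<d. u i a * cnj (u i b))"
    using psd_kernel_gram[OF r] by blast
  have "(\<Sum>a<d. \<Sum>b<d. r a b * w a b) = (\<Sum>a<d. \<Sum>b<d. \<Sum>i<d. cnj (cnj (u i a)) * w a b * cnj (u i b))"
    using u by (intro sum.cong refl) (simp add: sum_distrib_left sum_distrib_right mult_ac)
  also have "\<dots> = (\<Sum>a<d. \<Sum>i<d. \<Sum>b<d. cnj (cnj (u i a)) * w a b * cnj (u i b))"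
    by (rule sum.cong[OF refl], rule sum.swap)
  also have "\<dots> = (\<Sum>i<d. quad_form d w (\<lambda>a. cnj (u i a)))"
    unfolding quad_form_def by (rule sum.swap)
  also have "\<dots> \<ge> 0"
    using w unfolding psd_kernel_def by (intro sum_nonneg) auto
  finally show ?thesis .
qed

lemma psd_kernel_pairing_le_trace:
  assumes r: "psd_kernel d r" and x: "psd_kernel d x"
  shows "Re (\<Sum>a<d. \<Sum>b<d. r a b * x a b) \<le> Re (\<Sum>a<d. r a a) * Re (\<Sum>a<d. x a a)"
proof -
  obtain u where u: "\<And>a b. a < d \<Longrightarrow> b < d \<Longrightarrow> r a b = (\<Sum>i<d. u i a * cnj (u i b))"
    using psd_kernel_gram[OF r] by blast
  obtain z where z: "\<And>a b. a < d \<Longrightarrow> b < d \<Longrightarrow> x a b = (\<Sum>j<d. z j a * cnj (z j b))"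
    using psd_kernel_gram[OF x] by blast
  define c where "c i j = (\<Sum>a<d. u i a * z j a)" for i j
  have "(\<Sum>a<d. \<Sum>b<d. r a b * x a b)
      = (\<Sum>a<d. \<Sum>b<d. \<Sum>i<d. \<Sum>j<d. (u i a * cnj (u i b)) * (z j a * cnj (z j b)))"
    using u z by (intro sum.cong refl) (simp add: sum_product)
  also have "\<dots> = (\<Sum>i<d. \<Sum>j<d. \<Sum>a<d. \<Sum>b<d. (u i a * z j a) * cnj (u i b * z j b))"
    by (subst sum_swap_pairs) (intro sum.cong refl; simp add: mult_ac)
  also have "\<dots> = (\<Sum>i<d. \<Sum>j<d. c i j * cnj (c i j))"
    by (simp only: c_def cnj_sum sum_product)
  finally have "Re (\<Sum>a<d. \<Sum>b<d. r a b * x a b) = (\<Sum>i<d. \<Sum>j<d. (cmod (c i j))\<^sup>2)"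
    by (simp only: Re_sum Re_mult_cnj)
  also have "\<dots> \<le> (\<Sum>i<d. \<Sum>j<d. (\<Sum>a<d. (cmod (u i a))\<^sup>2) * (\<Sum>a<d. (cmod (z j a))\<^sup>2))"
    unfolding c_def by (intro sum_mono cmod_sum_mult_square_le)
  also have "\<dots> = Re (\<Sum>a<d. \<Sum>i<d. u i a * cnj (u i a)) * Re (\<Sum>a<d. \<Sum>j<d. z j a * cnj (z j a))"
    unfolding Re_sum_mult_cnj by (simp add: sum_product)
  also have "\<dots> = Re (\<Sum>a<d. r a a) * Re (\<Sum>a<d. x a a)"
    using u z by simp
  finally show ?thesis .
qed

lemma psd_kernel_compress:
  assumes z: "psd_kernel (k * d) z" and d: "0 < d"
  shows "psd_kernel d (\<lambda>a b. \<Sum>p<k. \<Sum>q<k. cnj (v p) * v q * z (p * d + a) (q * d + b))"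
  unfolding psd_kernel_def
proof
  fix y :: "nat \<Rightarrow> complex"
  define x where "x j = v (j div d) * y (j mod d)" for j
  have x: "x (p * d + a) = v p * y a" if "a < d" for p a
    unfolding x_def using that by simp
  have "quad_form (k * d) z x
      = (\<Sum>p<k. \<Sum>a<d. \<Sum>q<k. \<Sum>b<d. cnj (y a) * (cnj (v p) * v q * z (p * d + a) (q * d + b)) * y b)"
    unfolding quad_form_def sum_lessThan_mult_blocks by (intro sum.cong refl) (simp add: x mult_ac)
  also have "\<dots> = (\<Sum>p<k. \<Sum>q<k. \<Sum>a<d. \<Sum>b<d. cnj (y a) * (cnj (v p) * v q * z (p * d + a) (q * d + b)) * y b)"
    by (rule sum.cong[OF refl], rule sum.swap)
  also have "\<dots> = quad_form d (\<lambda>a b. \<Sum>p<k. \<Sum>q<k. cnj (v p) * v q * z (p * d + a) (q * d + b)) y"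
    unfolding quad_form_def by (subst sum_swap_pairs) (simp add: sum_distrib_left sum_distrib_right)
  finally show "0 \<le> quad_form d (\<lambda>a b. \<Sum>p<k. \<Sum>q<k. cnj (v p) * v q * z (p * d + a) (q * d + b)) y"
    using z unfolding psd_kernel_def by metis
qed

definition pairing :: "nat \<Rightarrow> complex mat \<Rightarrow> opmap" where
  "pairing d R Z = mat 1 1 (\<lambda>_. \<Sum>a<d. \<Sum>b<d. R $$ (a, b) * Z $$ (a, b))"

lemma app_right_pairing:
  "app_right k d 1 (pairing d R) Z
    = mat k k (\<lambda>(p, q). \<Sum>a<d. \<Sum>b<d. R $$ (a, b) * Z $$ (p * d + a, q * d + b))"
  by (rule eq_matI) (simp_all add: app_right_def pairing_def rblock_def)

lemma lin_on_pairing: "lin_on d (pairing d R)"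
  unfolding lin_on_def pairing_def
  by (auto intro!: eq_matI simp: sum.distrib sum_distrib_left algebra_simps)

lemma lin_on_app_right_pairing: "lin_on d (\<lambda>R. app_right k d 1 (pairing d R) Z)"
  unfolding lin_on_def app_right_pairing
  by (auto intro!: eq_matI simp: sum.distrib sum_distrib_left algebra_simps)

lemma lin_on_smult_mat:
  assumes "lin_on d L" and "\<And>X. X \<in> carrier_mat d d \<Longrightarrow> L X \<in> carrier_mat n n"
  shows "lin_on d (\<lambda>X. c \<cdot>\<^sub>m L X)"
  unfolding lin_on_def
proof (intro conjI ballI allI)
  fix X Y :: "complex mat"
  assume X: "X \<in> carrier_mat d d" and Y: "Y \<in> carrier_mat d d"
  then have "L (X + Y) = L X + L Y"
    using assms(1) by (simp add: lin_on_def)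
  then show "c \<cdot>\<^sub>m L (X + Y) = c \<cdot>\<^sub>m L X + c \<cdot>\<^sub>m L Y"
    using add_smult_distrib_left_mat[OF assms(2)[OF X] assms(2)[OF Y]] by simp
next
  fix X :: "complex mat" and e :: complex
  assume "X \<in> carrier_mat d d"
  then show "c \<cdot>\<^sub>m L (e \<cdot>\<^sub>m X) = e \<cdot>\<^sub>m (c \<cdot>\<^sub>m L X)"
    using assms(1) by (auto simp: lin_on_def intro!: eq_matI)
qed

lemma psd_app_right_pairing:
  assumes R: "psd_kernel d (\<lambda>a b. R $$ (a, b))" and Z: "psd (k * d) Z" and d: "0 < d"
  shows "psd k (app_right k d 1 (pairing d R) Z)"
proof -
  have Z': "psd_kernel (k * d) (\<lambda>i j. Z $$ (i, j))"
    using Z psd_iff_psd_kernel by blast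
  have "0 \<le> quad_form k (\<lambda>p q. app_right k d 1 (pairing d R) Z $$ (p, q)) v" for v
  proof -
    have "quad_form k (\<lambda>p q. app_right k d 1 (pairing d R) Z $$ (p, q)) v
        = (\<Sum>p<k. \<Sum>q<k. \<Sum>a<d. \<Sum>b<d. R $$ (a, b) * (cnj (v p) * v q * Z $$ (p * d + a, q * d + b)))"
      unfolding quad_form_def app_right_pairing
      by (intro sum.cong refl) (simp add: sum_distrib_left sum_distrib_right mult_ac)
    also have "\<dots> = (\<Sum>a<d. \<Sum>b<d. R $$ (a, b) * (\<Sum>p<k. \<Sum>q<k. cnj (v p) * v q * Z $$ (p * d + a, q * d + b)))"
      by (subst sum_swap_pairs) (simp add: sum_distrib_left)
    finally show ?thesis
      using psd_kernel_pairing_nonneg[OF R psd_kernel_compress[OF Z' d]] by simp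
  qed
  then show ?thesis
    unfolding psd_iff_psd_kernel psd_kernel_def by (simp add: app_right_def)
qed

lemma cptni_pairing:
  assumes R: "density d R" and d: "0 < d"
  shows "cptni d 1 (pairing d R)"
proof -
  have R_psd: "psd_kernel d (\<lambda>a b. R $$ (a, b))" and R_tr: "(\<Sum>a<d. R $$ (a, a)) = 1"
    using R unfolding density_def psd_iff_psd_kernel tr_def by auto
  have "Re (tr (pairing d R X)) \<le> Re (tr X)" if "psd d X" for X
  proof -
    have "X \<in> carrier_mat d d" and "psd_kernel d (\<lambda>a b. X $$ (a, b))"
      using that psd_iff_psd_kernel by auto
    then show ?thesis
      using psd_kernel_pairing_le_trace[OF R_psd] R_tr by (simp add: tr_def pairing_def)
  qed
  moreover have "pairing d R X \<in> carrier_mat 1 1" for X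
    by (simp add: pairing_def)
  ultimately show ?thesis
    unfolding cptni_def cp_map_def
    using lin_on_pairing psd_app_right_pairing[OF R_psd _ d] by auto
qed

text \<open>The maximally entangled state on A \<otimes> A, the projection onto (\<Sum>a. |a\<rangle> \<otimes> |a\<rangle>) / sqrt d;
  the index i stands for the pair (i div d, i mod d).\<close>

definition max_entangled :: "nat \<Rightarrow> complex mat" where
  "max_entangled d = mat (d * d) (d * d)
     (\<lambda>(i, j). if i div d = i mod d \<and> j div d = j mod d then 1 / of_nat d else 0)"

lemma density_max_entangled:
  assumes d: "0 < d"
  shows "density (d * d) (max_entangled d)"
proof -
  define f :: "nat \<Rightarrow> complex" where "f i = (if i div d = i mod d then 1 else 0)" for i
  have entry: "max_entangled d $$ (i, j) = f i * f j / of_nat d" if "i < d * d" "j < d * d" for i j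
    unfolding max_entangled_def f_def using that by simp
  have "tr (max_entangled d) = (\<Sum>i<d * d. f i * f i / of_nat d)"
    unfolding tr_def by (intro sum.cong) (simp_all add: entry max_entangled_def f_def)
  also have "\<dots> = (\<Sum>p<d. \<Sum>a<d. f (p * d + a) * f (p * d + a) / of_nat d)"
    by (rule sum_lessThan_mult_blocks)
  also have "\<dots> = (\<Sum>p<d. \<Sum>a<d. if a = p then 1 / of_nat d else 0)"
    by (intro sum.cong refl) (auto simp: f_def)
  finally have "tr (max_entangled d) = 1"
    using d by simp
  moreover have "0 \<le> quad_form (d * d) (\<lambda>i j. max_entangled d $$ (i, j)) v" for v
  proof -
    define s where "s = (\<Sum>j<d * d. f j * v j)"
    have "quad_form (d * d) (\<lambda>i j. max_entangled d $$ (i, j)) v = cnj s * s / of_nat d"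
      unfolding quad_form_def s_def cnj_sum sum_product sum_divide_distrib
      by (intro sum.cong refl) (simp add: entry f_def mult_ac)
    also have "\<dots> = of_real ((cmod s)\<^sup>2 / real d)"
      using complex_norm_square[of s] by (simp add: mult.commute)
    finally show ?thesis
      by (simp add: less_eq_complex_def)
  qed
  ultimately show ?thesis
    unfolding density_def psd_iff_psd_kernel psd_kernel_def by (simp add: max_entangled_def)
qed

lemma app_right_pairing_max_entangled:
  assumes R: "R \<in> carrier_mat d d"
  shows "app_right d d 1 (pairing d R) (max_entangled d) = (1 / of_nat d) \<cdot>\<^sub>m R"
proof (rule eq_matI)
  fix p q
  assume "p < dim_row ((1 / of_nat d) \<cdot>\<^sub>m R)" "q < dim_col ((1 / of_nat d) \<cdot>\<^sub>m R)"
  then have p: "p < d" and q: "q < d"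
    using R by auto
  have index: "i * d + a < d * d" if "i < d" "a < d" for i a
    using that mult_le_mono1[of "Suc i" d d] by simp
  have "app_right d d 1 (pairing d R) (max_entangled d) $$ (p, q)
      = (\<Sum>a<d. \<Sum>b<d. if a = p then if b = q then R $$ (a, b) / of_nat d else 0 else 0)"
    unfolding app_right_pairing using p q
    by (auto simp: max_entangled_def index intro!: sum.cong)
  also have "\<dots> = ((1 / of_nat d) \<cdot>\<^sub>m R) $$ (p, q)"
    using p q R by (subst sum.swap) simp
  finally show "app_right d d 1 (pairing d R) (max_entangled d) $$ (p, q)
    = ((1 / of_nat d) \<cdot>\<^sub>m R) $$ (p, q)" .
qed (use R in \<open>simp_all add: app_right_def\<close>)

lemma axiom_E_star_eq_app_right_pairing:
  assumes E: "axiom_E star ext" and dA: "0 < dA" and dB: "0 < dB"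
    and ch: "channel dA dB \<E>" and \<rho>: "density dA \<rho>"
  shows "star dA dB \<E> \<rho>
    = of_nat dA \<cdot>\<^sub>m app_right (dA * dB) dA 1 (pairing dA \<rho>) (ext dA dB dA \<E> (max_entangled dA))"
proof -
  have \<rho>_carrier: "\<rho> \<in> carrier_mat dA dA"
    using \<rho> unfolding density_def psd_def by simp
  have "qsst star dA dA (max_entangled dA)"
    unfolding qsst_def using density_max_entangled[OF dA] by simp
  then have "app_right (dA * dB) dA 1 (pairing dA \<rho>) (ext dA dB dA \<E> (max_entangled dA))
      = ext dA dB 1 \<E> (app_right dA dA 1 (pairing dA \<rho>) (max_entangled dA))"
    using E[unfolded axiom_E_def, THEN conjunct2, rule_format, OF dA dB dA ch]
      cptni_pairing[OF \<rho> dA] by simp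
  also have "\<dots> = ext dA dB 1 \<E> ((1 / of_nat dA) \<cdot>\<^sub>m \<rho>)"
    unfolding app_right_pairing_max_entangled[OF \<rho>_carrier] ..
  also have "\<dots> = (1 / of_nat dA) \<cdot>\<^sub>m star dA dB \<E> \<rho>"
    using E[unfolded axiom_E_def, THEN conjunct1, rule_format, OF dA dB ch \<rho>] .
  finally show ?thesis
    using dA by (auto intro!: eq_matI)
qed

theorem proposition1:
  fixes star :: sotf
    and ext :: "nat \<Rightarrow> nat \<Rightarrow> nat \<Rightarrow> opmap \<Rightarrow> complex mat \<Rightarrow> complex mat"
  assumes "state_over_time_fun star"
    and "axiom_E star ext"
  shows "state_linear star"
  unfolding state_linear_def
proof (intro allI impI)
  \<comment> \<open>Only axiom (E) is needed.\<close>
  fix dA dB \<E>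
  assume dA: "0 < dA" and dB: "0 < dB" and ch: "channel dA dB \<E>"
  define L where
    "L Y = of_nat dA \<cdot>\<^sub>m app_right (dA * dB) dA 1 (pairing dA Y) (ext dA dB dA \<E> (max_entangled dA))" for Y
  have lin: "lin_on dA L"
    unfolding L_def
    by (rule lin_on_smult_mat[OF lin_on_app_right_pairing, where n = "dA * dB"]) (simp add: app_right_def)
  have "L (c \<cdot>\<^sub>m \<rho>) = c \<cdot>\<^sub>m star dA dB \<E> \<rho>" if \<rho>: "density dA \<rho>" for \<rho> c
  proof -
    have "\<rho> \<in> carrier_mat dA dA"
      using \<rho> unfolding density_def psd_def by simp
    then have "L (c \<cdot>\<^sub>m \<rho>) = c \<cdot>\<^sub>m L \<rho>"
      using lin unfolding lin_on_def by blast
    also have "L \<rho> = star dA dB \<E> \<rho>"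
      unfolding L_def using axiom_E_star_eq_app_right_pairing[OF assms(2) dA dB ch \<rho>] by simp
    finally show ?thesis .
  qed
  with lin show "\<exists>L. lin_on dA L \<and> (\<forall>\<rho> c. density dA \<rho> \<longrightarrow> L (c \<cdot>\<^sub>m \<rho>) = c \<cdot>\<^sub>m star dA dB \<E> \<rho>)"
    by blast
qed

end
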